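(* Algorithm $\mathsf{AG}$ (described in the context) implements an asymmetric gather protocol, i.e., it satisfies the Common Core, Validity and Agreement properties defined in the context.
   Context: System model: a finite set $\mathcal{P}=\{p_1,\dots,p_n\}$ of processes communicating asynchronously over authenticated point-to-point links; every message sent from a correct process to a correct process is eventually delivered. A process that follows its protocol is correct; others (faulty, Byzantine) may behave arbitrarily. $F\subseteq\mathcal{P}$ denotes the (unknown) set of faulty processes of an execution. For $\mathcal{A}\subseteq 2^{\mathcal{P}}$, write $\mathcal{A}^*=\{A' : A'\subseteq A,\ A\in\mathcal{A}\}$. An asymmetric fail-prone system is an array $\mathbb{F}=[\mathcal{F}_1,\dots,\mathcal{F}_n]$ with $\mathcal{F}_i\subseteq 2^{\mathcal{P}}$. An asymmetric Byzantine quorum system for $\mathbb{F}$ is an array $\mathbb{Q}=[\mathcal{Q}_1,\dots,\mathcal{Q}_n]$ with $\mathcal{Q}_i\subseteq 2^{\mathcal{P}}$ (quorums for $p_i$) satisfying: (consistency) for all $i,j$, all $Q_i\in\mathcal{Q}_i$, $Q_j\in\mathcal{Q}_j$, $F_{ij}\in\mathcal{F}_i^*\cap\mathcal{F}_j^*$: $Q_i\cap Q_j\not\subseteq F_{ij}$; (availability) for all $i$ and $F_i\in\mathcal{F}_i$ there is $Q_i\in\mathcal{Q}_i$ with $F_i\cap Q_i=\emptyset$. A kernel for $p_i$ is a set $K\subseteq\mathcal{P}$ intersecting every $Q\in\mathcal{Q}_i$; $\mathcal{K}_i$ is the set of kernels for $p_i$. A correct process $p_i$ is wise if $F\in\mathcal{F}_i^*$.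 A guild is a set $\mathcal{G}$ of wise processes such that every $p_i\in\mathcal{G}$ has some $Q_i\in\mathcal{Q}_i$ with $Q_i\subseteq\mathcal{G}$. An execution with a guild is one in which a nonempty guild exists; the maximal guild $\mathcal{G}_{max}$ is the union of all guilds. Asymmetric reliable broadcast (arb-broadcast / arb-deliver) guarantees, in every execution with a guild: if a correct process arb-broadcasts $m$, every process of $\mathcal{G}_{max}$ eventually arb-delivers $m$; for each sender, all processes of $\mathcal{G}_{max}$ that arb-deliver from it deliver the same message; if some process of $\mathcal{G}_{max}$ arb-delivers a message from a sender, all processes of $\mathcal{G}_{max}$ eventually arb-deliver a message from that sender; a correct process arb-delivers at most one message per sender, and from a correct sender only a message it arb-broadcast. Algorithm $\mathsf{AG}$ (code of $p_i$; each correct process invokes ag-propose$(x_i)$ exactly once; each guarded "upon there being ..." action executes at most once, message handlers once per message). State: sets $S_i,T_i,U_i$ initially empty, boolean $sentT$ initially false. (1) Upon ag-propose$(x_i)$: arb-broadcast $(p_i,x_i)$. (2) Upon arb-delivering $(p_j,x_j)$ from $p_j$: $S_i\gets S_i\cup\{(p_j,x_j)\}$. (3) Upon there being $Q\in\mathcal{Q}_i$ such that for every $p_j\in Q$ some pair $(p_j,\cdot)\in S_i$: send $\langle\mathrm{DistributeS},p_i,S_i\rangle$ to all. (4) For a received $\langle\mathrm{DistributeS},p_j,S_j\rangle$: once $S_j\subseteq S_i$, provided $sentT$ is false at that moment, set $T_i\gets T_i\cup S_j$ and send $\langle\mathrm{Ack},p_i\rangle$ to $p_j$. (5) Upon Ack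 received from every member of some $Q\in\mathcal{Q}_i$: send Ready to all. (6) Upon Ready received from every member of some $Q\in\mathcal{Q}_i$: send Confirm to all. (7) Upon Confirm received from every member of some $K\in\mathcal{K}_i$: send Confirm to all. (8) Upon Confirm received from every member of some $Q\in\mathcal{Q}_i$: send $\langle\mathrm{DistributeT},p_i,T_i\rangle$ to all and set $sentT\gets$ true. (9) For a received $\langle\mathrm{DistributeT},p_j,T_j\rangle$ from $p_j$: once $T_j\subseteq S_i$, set $U_i\gets U_i\cup T_j$. (10) Upon DistributeT received from every member of some $Q\in\mathcal{Q}_i$: ag-deliver$(U_i)$. Asymmetric gather (interface ag-propose$(x)$ / ag-deliver$(U)$, where $U$ is a set of pairs $(p_j,x_j)$ meaning $p_j$ ag-proposed $x_j$) requires: (Common Core) in any execution with a guild, there exists a set $S^+$ composed of the values ag-proposed by the processes of some quorum $Q_i\in\mathcal{Q}_i$ of some process $p_i$ in the maximal guild, such that every process of the maximal guild that ag-delivers a set $U$ has $S^+\subseteq U$; (Validity) in any execution with a guild, if a process in the maximal guild includes $(p_j,x_j)$ in its ag-delivered set and $p_j$ is wise, then $p_j$ ag-proposed $x_j$; (Agreement) in any execution with a guild, for any two sets $U,U'$ ag-delivered by processes in the maximal guild, if $(p_j,x)\in U$ and $(p_j,x')\in U'$ then $x=x'$. *)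

theory Defs
  imports Main
begin

definition down_closure :: "'p set set \<Rightarrow> 'p set set" where
  "down_closure A = {A'. \<exists>B\<in>A. A' \<subseteq> B}"

definition asym_quorum_system ::
  "('p \<Rightarrow> 'p set set) \<Rightarrow> ('p \<Rightarrow> 'p set set) \<Rightarrow> bool" where
  "asym_quorum_system Fs Qs \<longleftrightarrow>
     (\<forall>i j Qi Qj Fij. Qi \<in> Qs i \<and> Qj \<in> Qs j \<and>
        Fij \<in> down_closure (Fs i) \<inter> down_closure (Fs j) \<longrightarrow> \<not> (Qi \<inter> Qj \<subseteq> Fij)) \<and>
     (\<forall>i. \<forall>Fi\<in>Fs i. \<exists>Qi\<in>Qs i. Fi \<inter> Qi = {})"

definition kernels :: "('p \<Rightarrow> 'p set set) \<Rightarrow> 'p \<Rightarrow> 'p set set" where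
  "kernels Qs i = {K. \<forall>Q\<in>Qs i. K \<inter> Q \<noteq> {}}"

definition wise :: "('p \<Rightarrow> 'p set set) \<Rightarrow> 'p set \<Rightarrow> 'p \<Rightarrow> bool" where
  "wise Fs F i \<longleftrightarrow> i \<notin> F \<and> F \<in> down_closure (Fs i)"

definition guild ::
  "('p \<Rightarrow> 'p set set) \<Rightarrow> ('p \<Rightarrow> 'p set set) \<Rightarrow> 'p set \<Rightarrow> 'p set \<Rightarrow> bool" where
  "guild Fs Qs F G \<longleftrightarrow> (\<forall>i\<in>G. wise Fs F i) \<and> (\<forall>i\<in>G. \<exists>Q\<in>Qs i. Q \<subseteq> G)"

definition max_guild ::
  "('p \<Rightarrow> 'p set set) \<Rightarrow> ('p \<Rightarrow> 'p set set) \<Rightarrow> 'p set \<Rightarrow> 'p set" where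
  "max_guild Fs Qs F = \<Union>{G. guild Fs Qs F G}"

definition has_guild ::
  "('p \<Rightarrow> 'p set set) \<Rightarrow> ('p \<Rightarrow> 'p set set) \<Rightarrow> 'p set \<Rightarrow> bool" where
  "has_guild Fs Qs F \<longleftrightarrow> (\<exists>G. G \<noteq> {} \<and> guild Fs Qs F G)"

text \<open>Point-to-point messages of AG. The sender field p_j of DistributeS / Ack /
DistributeT is identified with the (authenticated) sender of the link.\<close>
datatype ('p, 'v) msg =
    DistributeS "('p \<times> 'v) set"
  | AckM
  | ReadyM
  | ConfirmM
  | DistributeT "('p \<times> 'v) set"

text \<open>Events of an execution (all concern a correct process; faulty processes are
not modelled by states: messages from them may be received arbitrarily).
ArbDeliver i j m : process i arb-delivers message m from sender j.
Receive i j m : process i receives m from j over the link j -> i.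
Step i : process i executes one enabled guarded/pending action (3)-(10).\<close>
datatype ('p, 'v) event =
    Propose 'p 'v
  | ArbDeliver 'p 'p "'p \<times> 'v"
  | Receive 'p 'p "('p, 'v) msg"
  | Step 'p
  | Idle

record ('p, 'v) lstate =
  proposed :: bool
  S :: "('p \<times> 'v) set"
  T :: "('p \<times> 'v) set"
  U :: "('p \<times> 'v) set"
  sentT :: bool
  doneS :: bool
  pendS :: "('p \<times> ('p \<times> 'v) set) set"
  acks :: "'p set"
  doneReady :: bool
  readys :: "'p set"
  doneConf1 :: bool
  doneConf2 :: bool
  confirms :: "'p set"
  pendT :: "('p \<times> ('p \<times> 'v) set) set"
  acceptedT :: "'p set"
  delivered :: "('p \<times> 'v) set option"

definition init_lstate :: "('p, 'v) lstate" where
  "init_lstate = \<lparr>proposed = False, S = {}, T = {}, U = {}, sentT = False, doneS = False,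
     pendS = {}, acks = {}, doneReady = False, readys = {}, doneConf1 = False,
     doneConf2 = False, confirms = {}, pendT = {}, acceptedT = {}, delivered = None\<rparr>"

text \<open>Internal actions (3)-(10) of process i; out = set of (destination, message).\<close>
definition int_step ::
  "('p \<Rightarrow> 'p set set) \<Rightarrow> 'p \<Rightarrow> ('p, 'v) lstate \<Rightarrow> ('p, 'v) lstate
     \<Rightarrow> ('p \<times> ('p, 'v) msg) set \<Rightarrow> bool" where
  "int_step Qs i l l' out \<longleftrightarrow>
     \<comment> \<open>(3)\<close>
     (\<not> doneS l \<and> (\<exists>Q\<in>Qs i. \<forall>j\<in>Q. \<exists>x. (j, x) \<in> S l) \<and>
        l' = l\<lparr>doneS := True\<rparr> \<and> out = UNIV \<times> {DistributeS (S l)})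
   \<or> \<comment> \<open>(4)\<close>
     (\<exists>j Sj. (j, Sj) \<in> pendS l \<and> Sj \<subseteq> S l \<and>
        (if sentT l then l' = l\<lparr>pendS := pendS l - {(j, Sj)}\<rparr> \<and> out = {}
         else l' = l\<lparr>pendS := pendS l - {(j, Sj)}, T := T l \<union> Sj\<rparr> \<and> out = {(j, AckM)}))
   \<or> \<comment> \<open>(5)\<close>
     (\<not> doneReady l \<and> (\<exists>Q\<in>Qs i. Q \<subseteq> acks l) \<and>
        l' = l\<lparr>doneReady := True\<rparr> \<and> out = UNIV \<times> {ReadyM})
   \<or> \<comment> \<open>(6)\<close>
     (\<not> doneConf1 l \<and> (\<exists>Q\<in>Qs i. Q \<subseteq> readys l) \<and>
        l' = l\<lparr>doneConf1 := True\<rparr> \<and> out = UNIV \<times> {ConfirmM})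
   \<or> \<comment> \<open>(7)\<close>
     (\<not> doneConf2 l \<and> (\<exists>K\<in>kernels Qs i. K \<subseteq> confirms l) \<and>
        l' = l\<lparr>doneConf2 := True\<rparr> \<and> out = UNIV \<times> {ConfirmM})
   \<or> \<comment> \<open>(8)\<close>
     (\<not> sentT l \<and> (\<exists>Q\<in>Qs i. Q \<subseteq> confirms l) \<and>
        l' = l\<lparr>sentT := True\<rparr> \<and> out = UNIV \<times> {DistributeT (T l)})
   \<or> \<comment> \<open>(9)\<close>
     (\<exists>j Tj. (j, Tj) \<in> pendT l \<and> Tj \<subseteq> S l \<and>
        l' = l\<lparr>pendT := pendT l - {(j, Tj)}, U := U l \<union> Tj, acceptedT := insert j (acceptedT l)\<rparr>
        \<and> out = {})
   \<or> \<comment> \<open>(10)\<close>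
     (delivered l = None \<and> (\<exists>Q\<in>Qs i. Q \<subseteq> acceptedT l) \<and>
        l' = l\<lparr>delivered := Some (U l)\<rparr> \<and> out = {})"

fun recv_msg :: "'p \<Rightarrow> ('p, 'v) msg \<Rightarrow> ('p, 'v) lstate \<Rightarrow> ('p, 'v) lstate" where
  "recv_msg j (DistributeS X) l = l\<lparr>pendS := insert (j, X) (pendS l)\<rparr>"
| "recv_msg j AckM l = l\<lparr>acks := insert j (acks l)\<rparr>"
| "recv_msg j ReadyM l = l\<lparr>readys := insert j (readys l)\<rparr>"
| "recv_msg j ConfirmM l = l\<lparr>confirms := insert j (confirms l)\<rparr>"
| "recv_msg j (DistributeT X) l = l\<lparr>pendT := insert (j, X) (pendT l)\<rparr>"

text \<open>Global configuration: local states and the set of sent messages (from, to, msg).\<close>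
record ('p, 'v) config =
  lst :: "'p \<Rightarrow> ('p, 'v) lstate"
  net :: "('p \<times> 'p \<times> ('p, 'v) msg) set"

definition init_config :: "('p, 'v) config" where
  "init_config = \<lparr>lst = (\<lambda>_. init_lstate), net = {}\<rparr>"

definition gstep ::
  "('p \<Rightarrow> 'p set set) \<Rightarrow> 'p set \<Rightarrow> ('p, 'v) config \<Rightarrow> ('p, 'v) event
     \<Rightarrow> ('p, 'v) config \<Rightarrow> bool" where
  "gstep Qs F c e c' \<longleftrightarrow>
     (case e of
        Propose i x \<Rightarrow> i \<notin> F \<and> \<not> proposed (lst c i) \<and>
          c' = c\<lparr>lst := (lst c)(i := (lst c i)\<lparr>proposed := True\<rparr>)\<rparr>
      | ArbDeliver i j m \<Rightarrow> i \<notin> F \<and>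
          c' = c\<lparr>lst := (lst c)(i := (if fst m = j then (lst c i)\<lparr>S := insert m (S (lst c i))\<rparr>
                                       else lst c i))\<rparr>
      | Receive i j m \<Rightarrow> i \<notin> F \<and> (j \<in> F \<or> (j, i, m) \<in> net c) \<and>
          c' = c\<lparr>lst := (lst c)(i := recv_msg j m (lst c i))\<rparr>
      | Step i \<Rightarrow> i \<notin> F \<and> (\<exists>l' out. int_step Qs i (lst c i) l' out \<and>
          c' = \<lparr>lst = (lst c)(i := l'), net = net c \<union> {(i, k, m) | k m. (k, m) \<in> out}\<rparr>)
      | Idle \<Rightarrow> c' = c)"

text \<open>An execution of AG with faulty set F: a run of configurations c driven by events ev.
Action (1): the event Propose i x is ag-propose(x) at i, which arb-broadcasts (i, x).\<close>
definition execution ::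
  "('p \<Rightarrow> 'p set set) \<Rightarrow> 'p set \<Rightarrow> (nat \<Rightarrow> ('p, 'v) config) \<Rightarrow> (nat \<Rightarrow> ('p, 'v) event) \<Rightarrow> bool" where
  "execution Qs F c ev \<longleftrightarrow> c 0 = init_config \<and> (\<forall>t. gstep Qs F (c t) (ev t) (c (Suc t)))"

definition proposes_once :: "'p set \<Rightarrow> (nat \<Rightarrow> ('p, 'v) event) \<Rightarrow> bool" where
  "proposes_once F ev \<longleftrightarrow> (\<forall>i. i \<notin> F \<longrightarrow> (\<exists>t x. ev t = Propose i x))"

definition reliable_links ::
  "'p set \<Rightarrow> (nat \<Rightarrow> ('p, 'v) config) \<Rightarrow> (nat \<Rightarrow> ('p, 'v) event) \<Rightarrow> bool" where
  "reliable_links F c ev \<longleftrightarrow>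
     (\<forall>t i j m. i \<notin> F \<and> j \<notin> F \<and> (j, i, m) \<in> net (c t) \<longrightarrow> (\<exists>t'. ev t' = Receive i j m))"

definition arb_delivers :: "(nat \<Rightarrow> ('p, 'v) event) \<Rightarrow> 'p \<Rightarrow> 'p \<Rightarrow> 'p \<times> 'v \<Rightarrow> bool" where
  "arb_delivers ev i j m \<longleftrightarrow> (\<exists>t. ev t = ArbDeliver i j m)"

definition arb_spec ::
  "('p \<Rightarrow> 'p set set) \<Rightarrow> ('p \<Rightarrow> 'p set set) \<Rightarrow> 'p set \<Rightarrow> (nat \<Rightarrow> ('p, 'v) event) \<Rightarrow> bool" where
  "arb_spec Fs Qs F ev \<longleftrightarrow>
     (let G = max_guild Fs Qs F in
       (\<forall>j t x. j \<notin> F \<and> ev t = Propose j x \<longrightarrow> (\<forall>k\<in>G. arb_delivers ev k j (j, x))) \<and>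
       (\<forall>j k k' m m'. k \<in> G \<and> k' \<in> G \<and> arb_delivers ev k j m \<and> arb_delivers ev k' j m'
          \<longrightarrow> m = m') \<and>
       (\<forall>j k m. k \<in> G \<and> arb_delivers ev k j m \<longrightarrow> (\<forall>k'\<in>G. \<exists>m'. arb_delivers ev k' j m')) \<and>
       (\<forall>i j t t' m m'. i \<notin> F \<and> ev t = ArbDeliver i j m \<and> ev t' = ArbDeliver i j m' \<longrightarrow> t = t') \<and>
       (\<forall>i j t m. i \<notin> F \<and> j \<notin> F \<and> ev t = ArbDeliver i j m \<longrightarrow>
          (\<exists>t' x. t' < t \<and> ev t' = Propose j x \<and> m = (j, x))))"

definition ag_delivers :: "(nat \<Rightarrow> ('p, 'v) config) \<Rightarrow> 'p \<Rightarrow> ('p \<times> 'v) set \<Rightarrow> bool" where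
  "ag_delivers c i V \<longleftrightarrow> (\<exists>t. delivered (lst (c t) i) = Some V)"

definition ag_proposed :: "(nat \<Rightarrow> ('p, 'v) event) \<Rightarrow> 'p \<Rightarrow> 'v \<Rightarrow> bool" where
  "ag_proposed ev j x \<longleftrightarrow> (\<exists>t. ev t = Propose j x)"

end

theory Submission
  imports Defs
begin

(*
  Validity and Agreement are inherited from reliable broadcast, because every set a process
  ag-delivers consists of pairs it has arb-delivered.

  For Common Core, suppose a member k of the maximal guild delivers.  Its delivery quorum meets
  the guild, and a guild member sends DistributeT only after a quorum of Confirms, so some guild
  member has sent Confirm.  Following Confirms backwards in time leads to a guild member r that
  sent Ready, i.e. whose DistributeS set X was acknowledged by a quorum Q_r of r.  A correct
  process acknowledges X only after adding it to its set T, and T is frozen once it has been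
  distributed.  Any delivery quorum of a guild member meets Q_r in a correct process, so X is
  contained in every set delivered in the guild; and X covers a quorum of r.
*)

section \<open>Quorums and the maximal guild\<close>

lemma max_guild_memberE:
  assumes "i \<in> max_guild Fs Qs F"
  obtains G where "guild Fs Qs F G" "i \<in> G" "G \<subseteq> max_guild Fs Qs F"
  using assms unfolding max_guild_def by blast

lemma max_guild_wise: "i \<in> max_guild Fs Qs F \<Longrightarrow> wise Fs F i"
  by (erule max_guild_memberE) (simp add: guild_def)

lemma max_guild_not_faulty: "i \<in> max_guild Fs Qs F \<Longrightarrow> i \<notin> F"
  by (drule max_guild_wise) (simp add: wise_def)

lemma max_guild_quorum:
  assumes "i \<in> max_guild Fs Qs F"
  obtains Q where "Q \<in> Qs i" "Q \<subseteq> max_guild Fs Qs F"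
proof -
  obtain G where "guild Fs Qs F G" "i \<in> G" "G \<subseteq> max_guild Fs Qs F"
    using assms by (rule max_guild_memberE)
  then show ?thesis using that unfolding guild_def by blast
qed

lemma wise_quorums_intersect:
  assumes "asym_quorum_system Fs Qs" "wise Fs F i" "wise Fs F j" "Qi \<in> Qs i" "Qj \<in> Qs j"
  obtains x where "x \<in> Qi" "x \<in> Qj" "x \<notin> F"
proof -
  have "F \<in> down_closure (Fs i) \<inter> down_closure (Fs j)"
    using assms(2,3) by (simp add: wise_def)
  moreover have "\<forall>i j Qi Qj Fij. Qi \<in> Qs i \<and> Qj \<in> Qs j \<and>
      Fij \<in> down_closure (Fs i) \<inter> down_closure (Fs j) \<longrightarrow> \<not> Qi \<inter> Qj \<subseteq> Fij"
    using assms(1) unfolding asym_quorum_system_def by (rule conjunct1)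
  ultimately have "\<not> Qi \<inter> Qj \<subseteq> F"
    using assms(4,5) by blast
  then show ?thesis using that by blast
qed

lemma quorum_meets_max_guild:
  assumes "asym_quorum_system Fs Qs" "i \<in> max_guild Fs Qs F" "Q \<in> Qs i"
  obtains x where "x \<in> Q" "x \<in> max_guild Fs Qs F"
proof -
  obtain Q' where "Q' \<in> Qs i" "Q' \<subseteq> max_guild Fs Qs F"
    using assms(2) by (rule max_guild_quorum)
  moreover obtain x where "x \<in> Q" "x \<in> Q'" "x \<notin> F"
    using assms(1) max_guild_wise[OF assms(2)] max_guild_wise[OF assms(2)] assms(3) calculation(1)
    by (rule wise_quorums_intersect)
  ultimately show ?thesis using that by blast
qed

lemma kernel_meets_max_guild:
  assumes "i \<in> max_guild Fs Qs F" "K \<in> kernels Qs i"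
  obtains x where "x \<in> K" "x \<in> max_guild Fs Qs F"
proof -
  obtain Q where "Q \<in> Qs i" "Q \<subseteq> max_guild Fs Qs F"
    using assms(1) by (rule max_guild_quorum)
  with assms(2) show ?thesis using that unfolding kernels_def by blast
qed

section \<open>Transitions of algorithm AG\<close>

(* The guards on doneReady, doneConf1, doneConf2 and delivered are irrelevant for safety and
   are dropped. *)
lemma int_step_cases [consumes 1, case_names send_S discard_S ack_S ready confirm_readys
    confirm_kernel send_T accept_T deliver]:
  assumes "int_step Qs i l l' out"
  obtains
    (send_S) "\<not> doneS l" "\<exists>Q\<in>Qs i. \<forall>j\<in>Q. \<exists>x. (j, x) \<in> S l"
      "l' = l\<lparr>doneS := True\<rparr>" "out = UNIV \<times> {DistributeS (S l)}"
  | (discard_S) j Sj where "(j, Sj) \<in> pendS l" "sentT l"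
      "l' = l\<lparr>pendS := pendS l - {(j, Sj)}\<rparr>" "out = {}"
  | (ack_S) j Sj where "(j, Sj) \<in> pendS l" "Sj \<subseteq> S l" "\<not> sentT l"
      "l' = l\<lparr>pendS := pendS l - {(j, Sj)}, T := T l \<union> Sj\<rparr>" "out = {(j, AckM)}"
  | (ready) "\<exists>Q\<in>Qs i. Q \<subseteq> acks l" "l' = l\<lparr>doneReady := True\<rparr>" "out = UNIV \<times> {ReadyM}"
  | (confirm_readys) "\<exists>Q\<in>Qs i. Q \<subseteq> readys l" "l' = l\<lparr>doneConf1 := True\<rparr>" "out = UNIV \<times> {ConfirmM}"
  | (confirm_kernel) "\<exists>K\<in>kernels Qs i. K \<subseteq> confirms l" "l' = l\<lparr>doneConf2 := True\<rparr>"
      "out = UNIV \<times> {ConfirmM}"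
  | (send_T) "\<not> sentT l" "\<exists>Q\<in>Qs i. Q \<subseteq> confirms l" "l' = l\<lparr>sentT := True\<rparr>"
      "out = UNIV \<times> {DistributeT (T l)}"
  | (accept_T) j Tj where "(j, Tj) \<in> pendT l" "Tj \<subseteq> S l"
      "l' = l\<lparr>pendT := pendT l - {(j, Tj)}, U := U l \<union> Tj, acceptedT := insert j (acceptedT l)\<rparr>"
      "out = {}"
  | (deliver) "\<exists>Q\<in>Qs i. Q \<subseteq> acceptedT l" "l' = l\<lparr>delivered := Some (U l)\<rparr>" "out = {}"
  using assms unfolding int_step_def
  by (elim disjE exE conjE; (simp only: split: if_splits)?; (elim conjE)?; metis)

lemma gstep_cases [consumes 1, case_names propose arb_deliver receive step idle]:
  assumes "gstep Qs F c e c'"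
  obtains
    (propose) i where "c' = c\<lparr>lst := (lst c)(i := (lst c i)\<lparr>proposed := True\<rparr>)\<rparr>"
  | (arb_deliver) i m where "c' = c\<lparr>lst := (lst c)(i := (lst c i)\<lparr>S := insert m (S (lst c i))\<rparr>)\<rparr>"
  | (receive) i j m where "i \<notin> F" "j \<in> F \<or> (j, i, m) \<in> net c"
      "c' = c\<lparr>lst := (lst c)(i := recv_msg j m (lst c i))\<rparr>"
  | (step) i l' out where "i \<notin> F" "int_step Qs i (lst c i) l' out"
      "c' = \<lparr>lst = (lst c)(i := l'), net = net c \<union> {(i, k, m) | k m. (k, m) \<in> out}\<rparr>"
  | (idle) "c' = c"
  using assms unfolding gstep_def
  by (cases e) (auto split: if_splits intro: that)

lemma recv_msg_preserves [simp]:
  "S (recv_msg j m l) = S l" "T (recv_msg j m l) = T l" "U (recv_msg j m l) = U l"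
  "doneS (recv_msg j m l) = doneS l" "sentT (recv_msg j m l) = sentT l"
  "acceptedT (recv_msg j m l) = acceptedT l" "delivered (recv_msg j m l) = delivered l"
  by (cases m; simp)+

lemma recv_msg_mono:
  "acks l \<subseteq> acks (recv_msg j m l)" "confirms l \<subseteq> confirms (recv_msg j m l)"
  by (cases m; auto)+

lemma int_step_S: "int_step Qs i l l' out \<Longrightarrow> S l' = S l"
  by (cases rule: int_step_cases) auto

definition lstate_le :: "('p, 'v) lstate \<Rightarrow> ('p, 'v) lstate \<Rightarrow> bool" where
  "lstate_le l l' \<longleftrightarrow> S l \<subseteq> S l' \<and> T l \<subseteq> T l' \<and> (sentT l \<longrightarrow> sentT l' \<and> T l' = T l) \<and>
     (doneS l \<longrightarrow> doneS l') \<and> acks l \<subseteq> acks l' \<and> confirms l \<subseteq> confirms l'"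

lemma int_step_lstate_le: "int_step Qs i l l' out \<Longrightarrow> lstate_le l l'"
  by (cases rule: int_step_cases) (auto simp: lstate_le_def)

lemma lstate_le_refl [simp]: "lstate_le l l"
  by (simp add: lstate_le_def)

lemma gstep_lstate_le:
  assumes "gstep Qs F c e c'"
  shows "lstate_le (lst c k) (lst c' k)"
  using assms
proof (cases rule: gstep_cases)
  case (step i l' out)
  then show ?thesis using int_step_lstate_le[OF step(2)] by simp
qed (auto simp: lstate_le_def recv_msg_mono)

lemma gstep_net_mono: "gstep Qs F c e c' \<Longrightarrow> net c \<subseteq> net c'"
  by (cases rule: gstep_cases) auto

lemma gstep_new_msg:
  assumes "gstep Qs F c e c'" "(i, a, m) \<in> net c'" "(i, a, m) \<notin> net c"
  obtains out where "i \<notin> F" "int_step Qs i (lst c i) (lst c' i) out" "(a, m) \<in> out"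
  using assms by (cases rule: gstep_cases) auto

lemma gstep_acceptedT_cases [consumes 1, case_names unchanged accept]:
  assumes "gstep Qs F c e c'"
  obtains (unchanged) "U (lst c' k) = U (lst c k)" "acceptedT (lst c' k) = acceptedT (lst c k)"
  | (accept) j X where "(j, X) \<in> pendT (lst c k)" "X \<subseteq> S (lst c k)"
      "U (lst c' k) = U (lst c k) \<union> X" "acceptedT (lst c' k) = insert j (acceptedT (lst c k))"
  using assms
proof (cases rule: gstep_cases)
  case (step i l' out)
  show ?thesis
  proof (cases "k = i")
    case True
    from step(2) show ?thesis
      by (cases rule: int_step_cases) (use step(3) True that in auto)
  qed (use step(3) that in auto)
qed (use that in auto)

lemma gstep_delivered_cases [consumes 1, case_names unchanged deliver]:
  assumes "gstep Qs F c e c'"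
  obtains (unchanged) "delivered (lst c' k) = delivered (lst c k)"
  | (deliver) "\<exists>Q\<in>Qs k. Q \<subseteq> acceptedT (lst c k)" "delivered (lst c' k) = Some (U (lst c k))"
  using assms
proof (cases rule: gstep_cases)
  case (step i l' out)
  show ?thesis
  proof (cases "k = i")
    case True
    from step(2) show ?thesis
      by (cases rule: int_step_cases) (use step(3) True that in auto)
  qed (use step(3) that in auto)
qed (use that in auto)

lemma int_step_sends_DistributeS:
  assumes "int_step Qs i l l' out" "(a, DistributeS X) \<in> out"
  shows "\<not> doneS l \<and> doneS l' \<and> X = S l' \<and> (\<exists>Q\<in>Qs i. \<forall>j\<in>Q. \<exists>x. (j, x) \<in> X)"
  using assms by (cases rule: int_step_cases) auto

lemma int_step_sends_AckM:
  assumes "int_step Qs i l l' out" "(a, AckM) \<in> out"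
  shows "\<exists>X. (a, X) \<in> pendS l \<and> X \<subseteq> T l'"
  using assms by (cases rule: int_step_cases) auto

lemma int_step_sends_ReadyM:
  assumes "int_step Qs i l l' out" "(a, ReadyM) \<in> out"
  shows "\<exists>Q\<in>Qs i. Q \<subseteq> acks l'"
  using assms by (cases rule: int_step_cases) auto

lemma int_step_sends_ConfirmM:
  assumes "int_step Qs i l l' out" "(a, ConfirmM) \<in> out"
  shows "(\<exists>Q\<in>Qs i. Q \<subseteq> readys l) \<or> (\<exists>K\<in>kernels Qs i. K \<subseteq> confirms l)"
  using assms by (cases rule: int_step_cases) auto

lemma int_step_sends_DistributeT:
  assumes "int_step Qs i l l' out" "(a, DistributeT X) \<in> out"
  shows "\<not> sentT l \<and> sentT l' \<and> X = T l' \<and> (\<exists>Q\<in>Qs i. Q \<subseteq> confirms l')"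
  using assms by (cases rule: int_step_cases) auto

section \<open>Invariants of reachable configurations\<close>

fun recorded :: "('p, 'v) lstate \<Rightarrow> 'p \<Rightarrow> ('p, 'v) msg \<Rightarrow> bool" where
  "recorded l j (DistributeS X) \<longleftrightarrow> (j, X) \<in> pendS l"
| "recorded l j AckM \<longleftrightarrow> j \<in> acks l"
| "recorded l j ReadyM \<longleftrightarrow> j \<in> readys l"
| "recorded l j ConfirmM \<longleftrightarrow> j \<in> confirms l"
| "recorded l j (DistributeT X) \<longleftrightarrow> (j, X) \<in> pendT l"

lemma recorded_recv_msg:
  "recorded (recv_msg j m l) j' m' \<longleftrightarrow> (j', m') = (j, m) \<or> recorded l j' m'"
  by (cases m; cases m') auto

lemma recorded_update_S [simp]: "recorded (l\<lparr>S := X\<rparr>) j m = recorded l j m"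
  by (cases m) auto

lemma recorded_update_proposed [simp]: "recorded (l\<lparr>proposed := b\<rparr>) j m = recorded l j m"
  by (cases m) auto

lemma int_step_recorded:
  "int_step Qs i l l' out \<Longrightarrow> recorded l' j m \<Longrightarrow> recorded l j m"
  by (cases m) (auto simp: int_step_def split: if_splits)

definition inbox_sound :: "'p set \<Rightarrow> ('p, 'v) config \<Rightarrow> bool" where
  "inbox_sound F c \<longleftrightarrow> (\<forall>i j m. j \<notin> F \<longrightarrow> recorded (lst c i) j m \<longrightarrow> (j, i, m) \<in> net c)"

lemma gstep_inbox_sound:
  assumes "gstep Qs F c e c'" "inbox_sound F c"
  shows "inbox_sound F c'"
  using assms(1)
proof (cases rule: gstep_cases)
  case (step i l' out)
  then show ?thesis using assms(2) by (auto simp: inbox_sound_def dest: int_step_recorded)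
qed (use assms(2) in \<open>auto simp: inbox_sound_def recorded_recv_msg\<close>)

definition DistributeS_sound :: "('p \<Rightarrow> 'p set set) \<Rightarrow> 'p set \<Rightarrow> ('p, 'v) config \<Rightarrow> bool" where
  "DistributeS_sound Qs F c \<longleftrightarrow> (\<forall>i a X. i \<notin> F \<longrightarrow> (i, a, DistributeS X) \<in> net c \<longrightarrow>
     doneS (lst c i) \<and> X \<subseteq> S (lst c i) \<and> (\<exists>Q\<in>Qs i. \<forall>j\<in>Q. \<exists>x. (j, x) \<in> X))"

lemma gstep_DistributeS_sound:
  assumes step: "gstep Qs F c e c'" and inv: "DistributeS_sound Qs F c"
  shows "DistributeS_sound Qs F c'"
  unfolding DistributeS_sound_def
proof (intro allI impI)
  fix i a X
  assume "i \<notin> F" and sent: "(i, a, DistributeS X) \<in> net c'"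
  show "doneS (lst c' i) \<and> X \<subseteq> S (lst c' i) \<and> (\<exists>Q\<in>Qs i. \<forall>j\<in>Q. \<exists>x. (j, x) \<in> X)"
  proof (cases "(i, a, DistributeS X) \<in> net c")
    case True
    with inv \<open>i \<notin> F\<close> have
      "doneS (lst c i) \<and> X \<subseteq> S (lst c i) \<and> (\<exists>Q\<in>Qs i. \<forall>j\<in>Q. \<exists>x. (j, x) \<in> X)"
      unfolding DistributeS_sound_def by blast
    with gstep_lstate_le[OF step, of i] show ?thesis unfolding lstate_le_def by blast
  next
    case False
    with step sent obtain out
      where "int_step Qs i (lst c i) (lst c' i) out" "(a, DistributeS X) \<in> out"
      by (rule gstep_new_msg)
    then show ?thesis by (auto dest: int_step_sends_DistributeS)
  qed
qed

definition DistributeS_unique :: "'p set \<Rightarrow> ('p, 'v) config \<Rightarrow> bool" where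
  "DistributeS_unique F c \<longleftrightarrow> (\<forall>i a b X Y. i \<notin> F \<longrightarrow> (i, a, DistributeS X) \<in> net c \<longrightarrow>
     (i, b, DistributeS Y) \<in> net c \<longrightarrow> X = Y)"

(* Action (3) is taken at most once, since it requires and sets doneS, and it sends the same set
   to every process. *)
lemma gstep_DistributeS_unique:
  assumes step: "gstep Qs F c e c'" and uniq: "DistributeS_unique F c"
    and sound: "DistributeS_sound Qs F c"
  shows "DistributeS_unique F c'"
proof -
  have new: "\<not> doneS (lst c i) \<and> X = S (lst c' i)"
    if "(i, a, DistributeS X) \<in> net c'" "(i, a, DistributeS X) \<notin> net c" for i a X
  proof -
    from step that obtain out
      where "int_step Qs i (lst c i) (lst c' i) out" "(a, DistributeS X) \<in> out"
      by (rule gstep_new_msg)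
    then show ?thesis by (auto dest: int_step_sends_DistributeS)
  qed
  have old: "doneS (lst c i)" if "i \<notin> F" "(i, a, DistributeS X) \<in> net c" for i a X
    using sound that unfolding DistributeS_sound_def by blast
  show ?thesis
    unfolding DistributeS_unique_def
    by (metis new old uniq[unfolded DistributeS_unique_def])
qed

definition AckM_sound :: "'p set \<Rightarrow> ('p, 'v) config \<Rightarrow> bool" where
  "AckM_sound F c \<longleftrightarrow> (\<forall>i j. j \<notin> F \<longrightarrow> i \<notin> F \<longrightarrow> (j, i, AckM) \<in> net c \<longrightarrow>
     (\<exists>X. (i, j, DistributeS X) \<in> net c \<and> X \<subseteq> T (lst c j)))"

lemma gstep_AckM_sound:
  assumes step: "gstep Qs F c e c'" and inv: "AckM_sound F c" and inbox: "inbox_sound F c"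
  shows "AckM_sound F c'"
  unfolding AckM_sound_def
proof (intro allI impI)
  fix i j
  assume "j \<notin> F" "i \<notin> F" and sent: "(j, i, AckM) \<in> net c'"
  have "\<exists>X. (i, j, DistributeS X) \<in> net c \<and> X \<subseteq> T (lst c' j)"
  proof (cases "(j, i, AckM) \<in> net c")
    case True
    with inv \<open>j \<notin> F\<close> \<open>i \<notin> F\<close>
    obtain X where "(i, j, DistributeS X) \<in> net c" "X \<subseteq> T (lst c j)"
      unfolding AckM_sound_def by blast
    with gstep_lstate_le[OF step, of j] show ?thesis unfolding lstate_le_def by blast
  next
    case False
    with step sent obtain out where "int_step Qs j (lst c j) (lst c' j) out" "(i, AckM) \<in> out"
      by (rule gstep_new_msg)
    then obtain X where "(i, X) \<in> pendS (lst c j)" "X \<subseteq> T (lst c' j)"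
      by (blast dest: int_step_sends_AckM)
    with inbox \<open>i \<notin> F\<close> show ?thesis unfolding inbox_sound_def by force
  qed
  with gstep_net_mono[OF step] show "\<exists>X. (i, j, DistributeS X) \<in> net c' \<and> X \<subseteq> T (lst c' j)"
    by blast
qed

definition ReadyM_sound :: "('p \<Rightarrow> 'p set set) \<Rightarrow> 'p set \<Rightarrow> ('p, 'v) config \<Rightarrow> bool" where
  "ReadyM_sound Qs F c \<longleftrightarrow>
     (\<forall>i a. i \<notin> F \<longrightarrow> (i, a, ReadyM) \<in> net c \<longrightarrow> (\<exists>Q\<in>Qs i. Q \<subseteq> acks (lst c i)))"

lemma gstep_ReadyM_sound:
  assumes step: "gstep Qs F c e c'" and inv: "ReadyM_sound Qs F c"
  shows "ReadyM_sound Qs F c'"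
  unfolding ReadyM_sound_def
proof (intro allI impI)
  fix i a
  assume "i \<notin> F" and sent: "(i, a, ReadyM) \<in> net c'"
  show "\<exists>Q\<in>Qs i. Q \<subseteq> acks (lst c' i)"
  proof (cases "(i, a, ReadyM) \<in> net c")
    case True
    with inv \<open>i \<notin> F\<close> obtain Q where "Q \<in> Qs i" "Q \<subseteq> acks (lst c i)"
      unfolding ReadyM_sound_def by blast
    with gstep_lstate_le[OF step, of i] show ?thesis unfolding lstate_le_def by blast
  next
    case False
    with step sent obtain out where "int_step Qs i (lst c i) (lst c' i) out" "(a, ReadyM) \<in> out"
      by (rule gstep_new_msg)
    then show ?thesis by (rule int_step_sends_ReadyM)
  qed
qed

definition DistributeT_sound :: "('p \<Rightarrow> 'p set set) \<Rightarrow> 'p set \<Rightarrow> ('p, 'v) config \<Rightarrow> bool" where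
  "DistributeT_sound Qs F c \<longleftrightarrow> (\<forall>j a X. j \<notin> F \<longrightarrow> (j, a, DistributeT X) \<in> net c \<longrightarrow>
     sentT (lst c j) \<and> X = T (lst c j) \<and> (\<exists>Q\<in>Qs j. Q \<subseteq> confirms (lst c j)))"

lemma gstep_DistributeT_sound:
  assumes step: "gstep Qs F c e c'" and inv: "DistributeT_sound Qs F c"
  shows "DistributeT_sound Qs F c'"
  unfolding DistributeT_sound_def
proof (intro allI impI)
  fix j a X
  assume "j \<notin> F" and sent: "(j, a, DistributeT X) \<in> net c'"
  show "sentT (lst c' j) \<and> X = T (lst c' j) \<and> (\<exists>Q\<in>Qs j. Q \<subseteq> confirms (lst c' j))"
  proof (cases "(j, a, DistributeT X) \<in> net c")
    case True
    with inv \<open>j \<notin> F\<close> have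
      "sentT (lst c j) \<and> X = T (lst c j) \<and> (\<exists>Q\<in>Qs j. Q \<subseteq> confirms (lst c j))"
      unfolding DistributeT_sound_def by blast
    with gstep_lstate_le[OF step, of j] show ?thesis unfolding lstate_le_def by blast
  next
    case False
    with step sent obtain out
      where "int_step Qs j (lst c j) (lst c' j) out" "(a, DistributeT X) \<in> out"
      by (rule gstep_new_msg)
    then show ?thesis by (auto dest: int_step_sends_DistributeT)
  qed
qed

definition backers ::
  "'p set \<Rightarrow> ('p \<times> 'p \<times> ('p, 'v) msg) set \<Rightarrow> 'p \<Rightarrow> ('p \<times> 'v) set \<Rightarrow> 'p set" where
  "backers F N i V = {j. j \<in> F \<or> (\<exists>X. (j, i, DistributeT X) \<in> N \<and> X \<subseteq> V)}"

lemma backers_mono: "N \<subseteq> N' \<Longrightarrow> V \<subseteq> V' \<Longrightarrow> backers F N i V \<subseteq> backers F N' i V'"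
  unfolding backers_def by blast

definition accepted_sound :: "'p set \<Rightarrow> ('p, 'v) config \<Rightarrow> bool" where
  "accepted_sound F c \<longleftrightarrow>
     (\<forall>i. U (lst c i) \<subseteq> S (lst c i) \<and> acceptedT (lst c i) \<subseteq> backers F (net c) i (U (lst c i)))"

lemma gstep_accepted_sound:
  assumes step: "gstep Qs F c e c'" and inv: "accepted_sound F c" and inbox: "inbox_sound F c"
  shows "accepted_sound F c'"
  unfolding accepted_sound_def
proof
  fix k
  have S: "S (lst c k) \<subseteq> S (lst c' k)"
    using gstep_lstate_le[OF step] by (simp add: lstate_le_def)
  have N: "net c \<subseteq> net c'"
    using step by (rule gstep_net_mono)
  have old: "U (lst c k) \<subseteq> S (lst c k)"
    "acceptedT (lst c k) \<subseteq> backers F (net c) k (U (lst c k))"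
    using inv by (simp_all add: accepted_sound_def)
  from step show "U (lst c' k) \<subseteq> S (lst c' k) \<and>
      acceptedT (lst c' k) \<subseteq> backers F (net c') k (U (lst c' k))"
  proof (cases rule: gstep_acceptedT_cases[where k = k])
    case unchanged
    have "backers F (net c) k (U (lst c k)) \<subseteq> backers F (net c') k (U (lst c' k))"
      using N unchanged(1) by (intro backers_mono) auto
    with old S unchanged show ?thesis by auto
  next
    case (accept j X)
    have "j \<in> F \<or> (j, k, DistributeT X) \<in> net c"
      using inbox accept(1) unfolding inbox_sound_def by force
    then have "j \<in> backers F (net c') k (U (lst c' k))"
      using N accept(3) unfolding backers_def by auto
    moreover have "backers F (net c) k (U (lst c k)) \<subseteq> backers F (net c') k (U (lst c' k))"
      using N accept(3) by (intro backers_mono) auto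
    ultimately show ?thesis using old S accept by auto
  qed
qed

definition delivered_sound :: "('p \<Rightarrow> 'p set set) \<Rightarrow> 'p set \<Rightarrow> ('p, 'v) config \<Rightarrow> bool" where
  "delivered_sound Qs F c \<longleftrightarrow> (\<forall>i V. delivered (lst c i) = Some V \<longrightarrow>
     V \<subseteq> S (lst c i) \<and> (\<exists>Q\<in>Qs i. Q \<subseteq> backers F (net c) i V))"

lemma gstep_delivered_sound:
  assumes step: "gstep Qs F c e c'" and inv: "delivered_sound Qs F c"
    and accepted: "accepted_sound F c"
  shows "delivered_sound Qs F c'"
  unfolding delivered_sound_def
proof (intro allI impI)
  fix k V
  assume V: "delivered (lst c' k) = Some V"
  have S: "S (lst c k) \<subseteq> S (lst c' k)"
    using gstep_lstate_le[OF step] by (simp add: lstate_le_def)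
  have N: "backers F (net c) k W \<subseteq> backers F (net c') k W" for W
    using gstep_net_mono[OF step] order_refl by (rule backers_mono)
  from step show "V \<subseteq> S (lst c' k) \<and> (\<exists>Q\<in>Qs k. Q \<subseteq> backers F (net c') k V)"
  proof (cases rule: gstep_delivered_cases[where k = k])
    case unchanged
    with inv V have "V \<subseteq> S (lst c k) \<and> (\<exists>Q\<in>Qs k. Q \<subseteq> backers F (net c) k V)"
      unfolding delivered_sound_def by simp
    with S N[of V] show ?thesis by blast
  next
    case deliver
    then obtain Q where Q: "Q \<in> Qs k" "Q \<subseteq> acceptedT (lst c k)" and "V = U (lst c k)"
      using V by auto
    moreover have "U (lst c k) \<subseteq> S (lst c k)"
      "acceptedT (lst c k) \<subseteq> backers F (net c) k (U (lst c k))"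
      using accepted by (simp_all add: accepted_sound_def)
    ultimately show ?thesis using S N[of V] by blast
  qed
qed

definition ag_invariant :: "('p \<Rightarrow> 'p set set) \<Rightarrow> 'p set \<Rightarrow> ('p, 'v) config \<Rightarrow> bool" where
  "ag_invariant Qs F c \<longleftrightarrow> inbox_sound F c \<and> DistributeS_sound Qs F c \<and>
     DistributeS_unique F c \<and> AckM_sound F c \<and> ReadyM_sound Qs F c \<and> DistributeT_sound Qs F c \<and>
     accepted_sound F c \<and> delivered_sound Qs F c"

lemma ag_invariant_init_config:
  fixes Qs :: "'p \<Rightarrow> 'p set set" and F :: "'p set"
  shows "ag_invariant Qs F (init_config :: ('p, 'v) config)"
proof -
  have "\<not> recorded (lst (init_config :: ('p, 'v) config) i) j m" for i j m
    by (cases m) (simp_all add: init_config_def init_lstate_def)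
  then have "inbox_sound F (init_config :: ('p, 'v) config)"
    by (simp add: inbox_sound_def)
  then show ?thesis
    by (simp add: ag_invariant_def DistributeS_sound_def DistributeS_unique_def
        AckM_sound_def ReadyM_sound_def DistributeT_sound_def accepted_sound_def
        delivered_sound_def init_config_def init_lstate_def)
qed

lemma gstep_ag_invariant:
  "gstep Qs F c e c' \<Longrightarrow> ag_invariant Qs F c \<Longrightarrow> ag_invariant Qs F c'"
  unfolding ag_invariant_def
  by (metis gstep_inbox_sound gstep_DistributeS_sound gstep_DistributeS_unique gstep_AckM_sound
      gstep_ReadyM_sound gstep_DistributeT_sound gstep_accepted_sound gstep_delivered_sound)

lemma execution_ag_invariant:
  assumes "execution Qs F c ev"
  shows "ag_invariant Qs F (c t)"
proof (induction t)
  case 0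
  then show ?case using assms ag_invariant_init_config by (simp add: execution_def)
next
  case (Suc t)
  then show ?case using assms gstep_ag_invariant unfolding execution_def by blast
qed

lemma execution_net_mono:
  assumes "execution Qs F c ev" "t \<le> t'"
  shows "net (c t) \<subseteq> net (c t')"
  using lift_Suc_mono_le[of "\<lambda>t. net (c t)"] assms gstep_net_mono
  unfolding execution_def by blast

lemma execution_S_arb_delivered:
  assumes "execution Qs F c ev" "m \<in> S (lst (c t) i)"
  shows "arb_delivers ev i (fst m) m"
  using assms(2)
proof (induction t)
  case 0
  then show ?case using assms(1) by (simp add: execution_def init_config_def init_lstate_def)
next
  case (Suc t)
  have "gstep Qs F (c t) (ev t) (c (Suc t))" using assms(1) by (simp add: execution_def)
  with Suc show ?case
    by (cases "ev t") (auto simp: gstep_def arb_delivers_def int_step_S split: if_splits)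
qed

section \<open>Safety properties of an execution\<close>

locale ag_execution =
  fixes Fs Qs :: "'p \<Rightarrow> 'p set set" and F :: "'p set"
    and c :: "nat \<Rightarrow> ('p, 'v) config" and ev :: "nat \<Rightarrow> ('p, 'v) event"
  assumes quorum_system: "asym_quorum_system Fs Qs"
    and execution: "execution Qs F c ev"
    and arb: "arb_spec Fs Qs F ev"
begin

abbreviation MG :: "'p set" where
  "MG \<equiv> max_guild Fs Qs F"

lemma invariant: "ag_invariant Qs F (c t)"
  using execution by (rule execution_ag_invariant)

lemma net_mono: "t \<le> t' \<Longrightarrow> net (c t) \<subseteq> net (c t')"
  using execution by (rule execution_net_mono)

lemma recorded_sent: "j \<notin> F \<Longrightarrow> recorded (lst (c t) i) j m \<Longrightarrow> (j, i, m) \<in> net (c t)"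
  using invariant[of t] unfolding ag_invariant_def inbox_sound_def by blast

lemma DistributeS_sent:
  "i \<notin> F \<Longrightarrow> (i, a, DistributeS X) \<in> net (c t) \<Longrightarrow>
     X \<subseteq> S (lst (c t) i) \<and> (\<exists>Q\<in>Qs i. \<forall>j\<in>Q. \<exists>x. (j, x) \<in> X)"
  using invariant[of t] unfolding ag_invariant_def DistributeS_sound_def by blast

lemma DistributeS_sent_unique:
  "i \<notin> F \<Longrightarrow> (i, a, DistributeS X) \<in> net (c t) \<Longrightarrow> (i, b, DistributeS Y) \<in> net (c t) \<Longrightarrow>
     X = Y"
  using invariant[of t] unfolding ag_invariant_def DistributeS_unique_def by blast

lemma AckM_sent:
  "j \<notin> F \<Longrightarrow> i \<notin> F \<Longrightarrow> (j, i, AckM) \<in> net (c t) \<Longrightarrow>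
     \<exists>X. (i, j, DistributeS X) \<in> net (c t) \<and> X \<subseteq> T (lst (c t) j)"
  using invariant[of t] unfolding ag_invariant_def AckM_sound_def by blast

lemma ReadyM_sent:
  "i \<notin> F \<Longrightarrow> (i, a, ReadyM) \<in> net (c t) \<Longrightarrow> \<exists>Q\<in>Qs i. Q \<subseteq> acks (lst (c t) i)"
  using invariant[of t] unfolding ag_invariant_def ReadyM_sound_def by blast

lemma DistributeT_sent:
  "j \<notin> F \<Longrightarrow> (j, a, DistributeT X) \<in> net (c t) \<Longrightarrow>
     X = T (lst (c t) j) \<and> (\<exists>Q\<in>Qs j. Q \<subseteq> confirms (lst (c t) j))"
  using invariant[of t] unfolding ag_invariant_def DistributeT_sound_def by blast

lemma delivered_backed:
  "delivered (lst (c t) k) = Some V \<Longrightarrow> \<exists>Q\<in>Qs k. Q \<subseteq> backers F (net (c t)) k V"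
  using invariant[of t] unfolding ag_invariant_def delivered_sound_def by blast

lemma delivered_subset_S: "delivered (lst (c t) k) = Some V \<Longrightarrow> V \<subseteq> S (lst (c t) k)"
  using invariant[of t] unfolding ag_invariant_def delivered_sound_def by blast

lemma arb_agreement:
  assumes "k \<in> MG" "k' \<in> MG" "arb_delivers ev k j m" "arb_delivers ev k' j m'"
  shows "m = m'"
proof -
  have "\<forall>j k k' m m'. k \<in> MG \<and> k' \<in> MG \<and> arb_delivers ev k j m \<and> arb_delivers ev k' j m'
      \<longrightarrow> m = m'"
    using arb unfolding arb_spec_def Let_def by (elim conjE) assumption
  with assms show ?thesis by blast
qed

lemma arb_integrity:
  assumes "i \<notin> F" "j \<notin> F" "arb_delivers ev i j m"
  obtains x where "ag_proposed ev j x" "m = (j, x)"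
proof -
  have "\<forall>i j t m. i \<notin> F \<and> j \<notin> F \<and> ev t = ArbDeliver i j m \<longrightarrow>
      (\<exists>t' x. t' < t \<and> ev t' = Propose j x \<and> m = (j, x))"
    using arb unfolding arb_spec_def Let_def by (elim conjE) assumption
  with assms that show ?thesis unfolding arb_delivers_def ag_proposed_def by blast
qed

lemma S_entry_proposed:
  assumes "i \<notin> F" "j \<notin> F" "(j, x) \<in> S (lst (c t) i)"
  shows "ag_proposed ev j x"
  using execution_S_arb_delivered[OF execution assms(3)]
  by (auto elim: arb_integrity[OF assms(1,2)])

lemma validity:
  assumes "k \<in> MG" "ag_delivers c k V" "(j, x) \<in> V" "wise Fs F j"
  shows "ag_proposed ev j x"
proof -
  obtain t where "delivered (lst (c t) k) = Some V"
    using assms(2) unfolding ag_delivers_def by blast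
  with assms(3) have "(j, x) \<in> S (lst (c t) k)"
    by (auto dest: delivered_subset_S)
  moreover have "k \<notin> F" "j \<notin> F"
    using max_guild_not_faulty[OF assms(1)] assms(4) by (auto simp: wise_def)
  ultimately show ?thesis by (intro S_entry_proposed)
qed

lemma ag_delivers_arb_delivers:
  assumes "ag_delivers c k V" "(j, x) \<in> V"
  shows "arb_delivers ev k j (j, x)"
proof -
  obtain t where "delivered (lst (c t) k) = Some V"
    using assms(1) unfolding ag_delivers_def by blast
  with assms(2) have "(j, x) \<in> S (lst (c t) k)"
    by (auto dest: delivered_subset_S)
  then show ?thesis using execution_S_arb_delivered[OF execution] by fastforce
qed

lemma agreement:
  assumes "k \<in> MG" "k' \<in> MG" "ag_delivers c k V" "ag_delivers c k' V'"
    and "(j, x) \<in> V" "(j, x') \<in> V'"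
  shows "x = x'"
  using arb_agreement[OF assms(1,2) ag_delivers_arb_delivers[OF assms(3,5)]
      ag_delivers_arb_delivers[OF assms(4,6)]] by simp

lemma guild_delivery_Confirm:
  assumes "k \<in> MG" "delivered (lst (c t) k) = Some V"
  obtains g a where "g \<in> MG" "(g, a, ConfirmM) \<in> net (c t)"
proof -
  obtain Q where "Q \<in> Qs k" "Q \<subseteq> backers F (net (c t)) k V"
    using delivered_backed[OF assms(2)] by blast
  moreover obtain j where j: "j \<in> Q" "j \<in> MG"
    using quorum_system assms(1) calculation(1) by (rule quorum_meets_max_guild)
  ultimately have "j \<in> backers F (net (c t)) k V" by blast
  then obtain X where "(j, k, DistributeT X) \<in> net (c t)"
    using max_guild_not_faulty[OF j(2)] unfolding backers_def by blast
  then obtain Qj where "Qj \<in> Qs j" "Qj \<subseteq> confirms (lst (c t) j)"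
    using DistributeT_sent max_guild_not_faulty[OF j(2)] by blast
  moreover obtain g where g: "g \<in> Qj" "g \<in> MG"
    using quorum_system j(2) calculation(1) by (rule quorum_meets_max_guild)
  ultimately have "(g, j, ConfirmM) \<in> net (c t)"
    using recorded_sent[OF max_guild_not_faulty[OF g(2)]] by auto
  with g(2) show ?thesis by (rule that)
qed

(* Kernel amplification (action 7) only relays Confirms that were sent before, so the first
   Confirm sent by a guild member was triggered by a quorum of Readys, which meets the guild. *)
lemma guild_Confirm_Ready:
  assumes "g \<in> MG" "(g, a, ConfirmM) \<in> net (c t)"
  shows "\<exists>r\<in>MG. \<exists>b. (r, b, ReadyM) \<in> net (c t)"
  using assms
proof (induction t arbitrary: g a)
  case 0
  then show ?case using execution by (simp add: execution_def init_config_def)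
next
  case (Suc t)
  have step: "gstep Qs F (c t) (ev t) (c (Suc t))"
    using execution by (simp add: execution_def)
  have "\<exists>r\<in>MG. \<exists>b. (r, b, ReadyM) \<in> net (c t)"
  proof (cases "(g, a, ConfirmM) \<in> net (c t)")
    case True
    with Suc.IH Suc.prems(1) show ?thesis by blast
  next
    case False
    with step Suc.prems(2) obtain out where
      "int_step Qs g (lst (c t) g) (lst (c (Suc t)) g) out" "(a, ConfirmM) \<in> out"
      by (rule gstep_new_msg)
    from int_step_sends_ConfirmM[OF this] consider
        Q where "Q \<in> Qs g" "Q \<subseteq> readys (lst (c t) g)"
      | K where "K \<in> kernels Qs g" "K \<subseteq> confirms (lst (c t) g)"
      by blast
    then show ?thesis
    proof cases
      case 1
      obtain r where "r \<in> Q" "r \<in> MG"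
        using quorum_system Suc.prems(1) 1(1) by (rule quorum_meets_max_guild)
      with 1(2) have "(r, g, ReadyM) \<in> net (c t)"
        using recorded_sent[OF max_guild_not_faulty[OF \<open>r \<in> MG\<close>]] by auto
      with \<open>r \<in> MG\<close> show ?thesis by blast
    next
      case 2
      obtain j where "j \<in> K" "j \<in> MG"
        using Suc.prems(1) 2(1) by (rule kernel_meets_max_guild)
      with 2(2) have "(j, g, ConfirmM) \<in> net (c t)"
        using recorded_sent[OF max_guild_not_faulty[OF \<open>j \<in> MG\<close>]] by auto
      with Suc.IH \<open>j \<in> MG\<close> show ?thesis by blast
    qed
  qed
  with gstep_net_mono[OF step] show ?case by blast
qed

(* A correct j in both quorums acknowledged r's DistributeS only after adding X to its T, and T
   is frozen once j has sent DistributeT; so the T that k accepted from j contains X. *)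
lemma acked_DistributeS_in_guild_delivery:
  assumes r: "r \<in> MG" "Qr \<in> Qs r" "Qr \<subseteq> acks (lst (c t) r)"
    "(r, a, DistributeS X) \<in> net (c t)"
    and k: "k \<in> MG" "delivered (lst (c t') k) = Some V"
  shows "X \<subseteq> V"
proof -
  define tm where "tm = max t t'"
  have net_tm: "net (c t) \<subseteq> net (c tm)" "net (c t') \<subseteq> net (c tm)"
    by (rule net_mono, simp add: tm_def)+
  have "r \<notin> F" using r(1) by (rule max_guild_not_faulty)
  obtain Qk where Qk: "Qk \<in> Qs k" "Qk \<subseteq> backers F (net (c t')) k V"
    using delivered_backed[OF k(2)] by blast
  obtain j where j: "j \<in> Qk" "j \<in> Qr" "j \<notin> F"
    using quorum_system max_guild_wise[OF k(1)] max_guild_wise[OF r(1)] Qk(1) r(2)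
    by (rule wise_quorums_intersect)
  from j(1,3) Qk(2) obtain XT where XT: "(j, k, DistributeT XT) \<in> net (c t')" "XT \<subseteq> V"
    unfolding backers_def by blast
  from XT(1) net_tm(2) have "(j, k, DistributeT XT) \<in> net (c tm)" by blast
  then have XT_eq: "XT = T (lst (c tm) j)"
    using DistributeT_sent[OF j(3)] by blast
  have "(j, r, AckM) \<in> net (c t)"
    using recorded_sent[OF j(3)] j(2) r(3) by auto
  with net_tm(1) have "(j, r, AckM) \<in> net (c tm)" by blast
  then obtain Y where Y: "(r, j, DistributeS Y) \<in> net (c tm)" "Y \<subseteq> T (lst (c tm) j)"
    using AckM_sent[OF j(3) \<open>r \<notin> F\<close>] by blast
  from r(4) net_tm(1) have "(r, a, DistributeS X) \<in> net (c tm)" by blast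
  with Y(1) have "Y = X"
    using DistributeS_sent_unique[OF \<open>r \<notin> F\<close>] by blast
  with Y(2) XT_eq XT(2) show ?thesis by blast
qed

lemma Ready_core_set:
  assumes "r \<in> MG" "(r, b, ReadyM) \<in> net (c t)"
  obtains Q X where "Q \<in> Qs r" "\<forall>j\<in>Q. \<exists>x. (j, x) \<in> X"
    "\<And>j x. (j, x) \<in> X \<Longrightarrow> j \<notin> F \<Longrightarrow> ag_proposed ev j x"
    "\<And>k V. k \<in> MG \<Longrightarrow> ag_delivers c k V \<Longrightarrow> X \<subseteq> V"
proof -
  have "r \<notin> F" using assms(1) by (rule max_guild_not_faulty)
  obtain Qr where Qr: "Qr \<in> Qs r" "Qr \<subseteq> acks (lst (c t) r)"
    using ReadyM_sent[OF \<open>r \<notin> F\<close> assms(2)] by blast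
  obtain j0 where "j0 \<in> Qr" "j0 \<notin> F"
    using quorum_system max_guild_wise[OF assms(1)] max_guild_wise[OF assms(1)] Qr(1) Qr(1)
    by (rule wise_quorums_intersect)
  then have "(j0, r, AckM) \<in> net (c t)"
    using recorded_sent[OF \<open>j0 \<notin> F\<close>] Qr(2) by auto
  then obtain X where X: "(r, j0, DistributeS X) \<in> net (c t)"
    using AckM_sent[OF \<open>j0 \<notin> F\<close> \<open>r \<notin> F\<close>] by blast
  then have "X \<subseteq> S (lst (c t) r)" "\<exists>Q\<in>Qs r. \<forall>j\<in>Q. \<exists>x. (j, x) \<in> X"
    using DistributeS_sent[OF \<open>r \<notin> F\<close>] by blast+
  then obtain Q where "Q \<in> Qs r" "\<forall>j\<in>Q. \<exists>x. (j, x) \<in> X" by blast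
  then show ?thesis
  proof (rule that)
    show "ag_proposed ev j x" if "(j, x) \<in> X" "j \<notin> F" for j x
      using S_entry_proposed[OF \<open>r \<notin> F\<close> that(2)] \<open>X \<subseteq> S (lst (c t) r)\<close> that(1) by blast
    show "X \<subseteq> V" if k: "k \<in> MG" "ag_delivers c k V" for k V
    proof -
      obtain t' where "delivered (lst (c t') k) = Some V"
        using k(2) unfolding ag_delivers_def by blast
      with assms(1) Qr X k(1) show ?thesis by (rule acked_DistributeS_in_guild_delivery)
    qed
  qed
qed

lemma common_core:
  assumes "proposes_once F ev" "has_guild Fs Qs F"
  shows "\<exists>i\<in>MG. \<exists>Q\<in>Qs i. \<exists>xs :: 'p \<Rightarrow> 'v.
    (\<forall>j\<in>Q. j \<notin> F \<longrightarrow> ag_proposed ev j (xs j)) \<and>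
    (\<forall>k V. k \<in> MG \<and> ag_delivers c k V \<longrightarrow> (\<lambda>j. (j, xs j)) ` Q \<subseteq> V)"
proof (cases "\<exists>k V. k \<in> MG \<and> ag_delivers c k V")
  case True
  then obtain k V t where "k \<in> MG" "delivered (lst (c t) k) = Some V"
    unfolding ag_delivers_def by blast
  then obtain g a where "g \<in> MG" "(g, a, ConfirmM) \<in> net (c t)"
    by (rule guild_delivery_Confirm)
  then obtain r b where "r \<in> MG" "(r, b, ReadyM) \<in> net (c t)"
    using guild_Confirm_Ready by blast
  then show ?thesis
  proof (rule Ready_core_set)
    fix Q X
    assume Q: "Q \<in> Qs r" "\<forall>j\<in>Q. \<exists>x. (j, x) \<in> X"
      and proposed: "\<And>j x. (j, x) \<in> X \<Longrightarrow> j \<notin> F \<Longrightarrow> ag_proposed ev j x"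
      and core: "\<And>k V. k \<in> MG \<Longrightarrow> ag_delivers c k V \<Longrightarrow> X \<subseteq> V"
    from bchoice[OF Q(2)] obtain xs where "\<forall>j\<in>Q. (j, xs j) \<in> X" ..
    then have "(\<forall>j\<in>Q. j \<notin> F \<longrightarrow> ag_proposed ev j (xs j)) \<and>
        (\<forall>k V. k \<in> MG \<and> ag_delivers c k V \<longrightarrow> (\<lambda>j. (j, xs j)) ` Q \<subseteq> V)"
      using proposed core by blast
    with \<open>r \<in> MG\<close> Q(1) show ?thesis by blast
  qed
next
  case False
  obtain i where "i \<in> MG"
    using assms(2) unfolding has_guild_def max_guild_def by blast
  then obtain Q where "Q \<in> Qs i" by (rule max_guild_quorum)
  have "\<forall>j\<in>-F. \<exists>x. ag_proposed ev j x"
    using assms(1) unfolding proposes_once_def ag_proposed_def by blast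
  from bchoice[OF this] obtain xs where "\<forall>j\<in>-F. ag_proposed ev j (xs j)" ..
  with False \<open>i \<in> MG\<close> \<open>Q \<in> Qs i\<close> show ?thesis by blast
qed

end

theorem lemma3p8:
  fixes Fs Qs :: "'p::finite \<Rightarrow> 'p set set"
    and F :: "'p set"
    and c :: "nat \<Rightarrow> ('p, 'v) config"
    and ev :: "nat \<Rightarrow> ('p, 'v) event"
  assumes "asym_quorum_system Fs Qs"
    and "execution Qs F c ev"
    and "proposes_once F ev"
    and "reliable_links F c ev"
    and "arb_spec Fs Qs F ev"
    and "has_guild Fs Qs F"
  shows
    \<comment> \<open>Common Core\<close>
    "(\<exists>i\<in>max_guild Fs Qs F. \<exists>Q\<in>Qs i. \<exists>xs :: 'p \<Rightarrow> 'v.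
        (\<forall>j\<in>Q. j \<notin> F \<longrightarrow> ag_proposed ev j (xs j)) \<and>
        (\<forall>k V. k \<in> max_guild Fs Qs F \<and> ag_delivers c k V \<longrightarrow> (\<lambda>j. (j, xs j)) ` Q \<subseteq> V))
     \<and> \<comment> \<open>Validity\<close>
     (\<forall>k V j x. k \<in> max_guild Fs Qs F \<and> ag_delivers c k V \<and> (j, x) \<in> V \<and> wise Fs F j
        \<longrightarrow> ag_proposed ev j x)
     \<and> \<comment> \<open>Agreement\<close>
     (\<forall>k k' V V' j x x'. k \<in> max_guild Fs Qs F \<and> k' \<in> max_guild Fs Qs F \<and>
        ag_delivers c k V \<and> ag_delivers c k' V' \<and> (j, x) \<in> V \<and> (j, x') \<in> V' \<longrightarrow> x = x')"
proof -
  \<comment> \<open>All three properties are safety properties.\<close>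
  interpret ag_execution Fs Qs F c ev
    using assms(1,2,5) by unfold_locales
  show ?thesis
    by (intro conjI common_core[OF assms(3,6)] allI impI) (blast intro: validity agreement)+
qed

end
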